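(* The semantics $\mathit{cf1.5}$ and $\mathit{stg1.5}$ satisfy finitary directionality: for $\sigma\in\{\mathit{cf1.5},\mathit{stg1.5}\}$, whenever $\mathcal{F}$ is a finitary argumentation framework and $U\subseteq A_{\mathcal{F}}$ is not attacked from outside $U$, we have $\sigma(\mathcal{F}|_U)=\{S\cap U:S\in\sigma(\mathcal{F})\}$.
   Context: An argumentation framework (AF) is $\mathcal{F}=(A_{\mathcal{F}},R_{\mathcal{F}})$ with $R_{\mathcal{F}}\subseteq A_{\mathcal{F}}\times A_{\mathcal{F}}$; $a\rightarrow b$ means $(a,b)\in R_{\mathcal{F}}$. $\mathcal{F}$ is finitary if each argument has finitely many attackers. $U$ is not attacked from outside $U$ if there are no $a\in A_{\mathcal{F}}\setminus U$, $b\in U$ with $a\rightarrow b$. $\mathcal{F}|_S=(A_{\mathcal{F}}\cap S,R_{\mathcal{F}}\cap(S\times S))$. Conflict-free: no $a,b\in S$ with $a\rightarrow b$; naive = $\subseteq$-maximal conflict-free; $S^\oplus=S\cup\{x:\exists y\in S,\ y\rightarrow x\}$; stage = conflict-free $S$ with no conflict-free $T$ such that $S^\oplus\subsetneq T^\oplus$. $\mathrm{SCC}(\mathcal{F})$: strongly connected components of the attack graph. $D_S(X)=\{b\in X:\exists a\in S\setminus X,\ a\rightarrow b\}$. $S\in\mathit{cf1.5}(\mathcal{F})$ (resp. $\mathit{stg1.5}(\mathcal{F})$) iff $S$ is conflict-free and for each $X\in\mathrm{SCC}(\mathcal{F})$, $S\cap X$ is a naive (resp. stage) extension of $\mathcal{F}|_{X\setminus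 D_S(X)}$. *)

theory Defs
  imports Main
begin

text \<open>An argumentation framework is given by a set of arguments A and an attack
relation R (with R \<subseteq> A \<times> A, assumed in the theorem).\<close>

definition finitary :: "'a set \<Rightarrow> ('a \<times> 'a) set \<Rightarrow> bool" where
  "finitary A R \<longleftrightarrow> (\<forall>b\<in>A. finite {a. (a, b) \<in> R})"

definition unattacked :: "'a set \<Rightarrow> ('a \<times> 'a) set \<Rightarrow> 'a set \<Rightarrow> bool" where
  "unattacked A R U \<longleftrightarrow> \<not> (\<exists>a\<in>A - U. \<exists>b\<in>U. (a, b) \<in> R)"

definition conflict_free :: "'a set \<Rightarrow> ('a \<times> 'a) set \<Rightarrow> 'a set \<Rightarrow> bool" where
  "conflict_free A R S \<longleftrightarrow> S \<subseteq> A \<and> \<not> (\<exists>a\<in>S. \<exists>b\<in>S. (a, b) \<in> R)"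

definition naive :: "'a set \<Rightarrow> ('a \<times> 'a) set \<Rightarrow> 'a set \<Rightarrow> bool" where
  "naive A R S \<longleftrightarrow> conflict_free A R S \<and> \<not> (\<exists>T. conflict_free A R T \<and> S \<subset> T)"

definition range_plus :: "('a \<times> 'a) set \<Rightarrow> 'a set \<Rightarrow> 'a set" where
  "range_plus R S = S \<union> {x. \<exists>y\<in>S. (y, x) \<in> R}"

definition stage :: "'a set \<Rightarrow> ('a \<times> 'a) set \<Rightarrow> 'a set \<Rightarrow> bool" where
  "stage A R S \<longleftrightarrow> conflict_free A R S \<and>
     \<not> (\<exists>T. conflict_free A R T \<and> range_plus R S \<subset> range_plus R T)"

definition SCCs :: "'a set \<Rightarrow> ('a \<times> 'a) set \<Rightarrow> 'a set set" where
  "SCCs A R = {X. \<exists>a\<in>A. X = {b\<in>A. (a, b) \<in> R\<^sup>* \<and> (b, a) \<in> R\<^sup>*}}"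

definition D_set :: "('a \<times> 'a) set \<Rightarrow> 'a set \<Rightarrow> 'a set \<Rightarrow> 'a set" where
  "D_set R S X = {b\<in>X. \<exists>a\<in>S - X. (a, b) \<in> R}"

definition cf15 :: "'a set \<Rightarrow> ('a \<times> 'a) set \<Rightarrow> 'a set \<Rightarrow> bool" where
  "cf15 A R S \<longleftrightarrow> conflict_free A R S \<and>
     (\<forall>X\<in>SCCs A R. let Y = X - D_set R S X in
        naive (A \<inter> Y) (R \<inter> (Y \<times> Y)) (S \<inter> X))"

definition stg15 :: "'a set \<Rightarrow> ('a \<times> 'a) set \<Rightarrow> 'a set \<Rightarrow> bool" where
  "stg15 A R S \<longleftrightarrow> conflict_free A R S \<and>
     (\<forall>X\<in>SCCs A R. let Y = X - D_set R S X in
        stage (A \<inter> Y) (R \<inter> (Y \<times> Y)) (S \<inter> X))"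

end

(*
  Restriction to U is harmless: since U is unattacked, the SCCs of F|U are the SCCs of F
  contained in U, with the same D-sets.  The work is in extending S' from F|U to F.
  A finitary framework has countable SCCs, so each SCC X outside U can be enumerated and
  S \<inter> X chosen lexicographically greatest among the candidates (comparing S resp. S\<oplus>
  restricted to the undefeated part of X).  A lexicographic optimum is \<subseteq>-maximal, and
  "S \<inter> X is not beaten at position x" depends on finitely many arguments only.  For finitely
  many such constraints a solution is built SCC by SCC, always treating an SCC that attacks
  none of the others last; compactness of the Cantor space 2^A (Tychonoff) then yields a
  global solution.
*)
theory Submission
  imports Defs "HOL-Library.Countable_Set" "HOL-Analysis.Function_Topology"
begin

lemma finite_support_compactness:
  fixes K :: "('a set \<Rightarrow> bool) set"
  assumes support: "\<And>P. P \<in> K \<Longrightarrow> \<exists>V. finite V \<and> (\<forall>S S'. S \<inter> V = S' \<inter> V \<longrightarrow> P S = P S')"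
    and sat: "\<And>K0. finite K0 \<Longrightarrow> K0 \<subseteq> K \<Longrightarrow> \<exists>S. \<forall>P\<in>K0. P S"
  shows "\<exists>S. \<forall>P\<in>K. P S"
proof -
  define X where "X = product_topology (\<lambda>_::'a. discrete_topology (UNIV :: bool set)) UNIV"
  define C :: "('a set \<Rightarrow> bool) \<Rightarrow> ('a \<Rightarrow> bool) set" where "C P = {f. P (Collect f)}" for P
  have "compact_space X"
    unfolding X_def by (simp add: compact_space_product_topology compact_space_discrete_topology)
  have top: "topspace X = UNIV"
    unfolding X_def by (simp add: topspace_product_topology)
  have "closedin X (C P)" if P: "P \<in> K" for P
  proof -
    obtain V where "finite V" and V: "\<And>S S'. S \<inter> V = S' \<inter> V \<Longrightarrow> P S = P S'"
      using support[OF P] by blast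
    have "openin X (- C P)"
      unfolding X_def openin_product_topology_alt
    proof (intro ballI exI conjI)
      fix f assume f: "f \<in> - C P"
      let ?U = "\<lambda>i. if i \<in> V then {f i} else UNIV"
      have "{i \<in> UNIV. ?U i \<noteq> topspace (discrete_topology UNIV)} \<subseteq> V" by auto
      then show "finite {i \<in> UNIV. ?U i \<noteq> topspace (discrete_topology UNIV)}"
        using \<open>finite V\<close> by (rule finite_subset)
      show "f \<in> Pi\<^sub>E UNIV ?U" by (simp add: PiE_iff)
      show "Pi\<^sub>E UNIV ?U \<subseteq> - C P"
      proof
        fix g assume "g \<in> Pi\<^sub>E UNIV ?U"
        then have "g i = f i" if "i \<in> V" for i using that by (auto simp: PiE_iff dest!: spec[of _ i])
        then have "Collect g \<inter> V = Collect f \<inter> V" by auto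
        then show "g \<in> - C P" using f V[of "Collect g" "Collect f"] unfolding C_def by simp
      qed
    qed simp
    then show ?thesis using top by (simp add: closedin_def Compl_eq_Diff_UNIV)
  qed
  moreover have "\<Inter>F \<noteq> {}" if F: "finite F" "F \<subseteq> C ` K" for F
  proof -
    obtain K0 where "K0 \<subseteq> K" "finite K0" "F = C ` K0"
      using finite_subset_image[OF F] by blast
    then obtain S where "\<forall>P\<in>K0. P S" using sat by blast
    then have "(\<lambda>x. x \<in> S) \<in> \<Inter>F" using \<open>F = C ` K0\<close> unfolding C_def by auto
    then show ?thesis by blast
  qed
  ultimately have "\<Inter>(C ` K) \<noteq> {}"
    using compact_space_fip[THEN iffD1, OF \<open>compact_space X\<close>, rule_format, of "C ` K"] by blast
  then obtain f where "f \<in> \<Inter>(C ` K)" by blast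
  then show ?thesis unfolding C_def by auto
qed

definition lex_gt_at :: "('a \<Rightarrow> nat) \<Rightarrow> 'a set \<Rightarrow> 'a set \<Rightarrow> 'a set \<Rightarrow> 'a \<Rightarrow> bool" where
  "lex_gt_at e X P Q x \<longleftrightarrow>
     x \<in> X \<and> x \<in> P \<and> x \<notin> Q \<and> (\<forall>y\<in>X. e y < e x \<longrightarrow> (y \<in> P \<longleftrightarrow> y \<in> Q))"

lemma lex_gt_at_irrefl: "\<not> lex_gt_at e X P P x"
  unfolding lex_gt_at_def by auto

lemma lex_gt_at_trans:
  assumes "inj_on e X" and p: "lex_gt_at e X P Q p" and q: "lex_gt_at e X Q W q"
  shows "\<exists>z. lex_gt_at e X P W z"
proof -
  have "p \<in> X" "q \<in> X" "p \<noteq> q"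
    using p q unfolding lex_gt_at_def by auto
  then have "e p \<noteq> e q"
    using \<open>inj_on e X\<close> by (auto dest: inj_onD)
  then consider "e p < e q" | "e q < e p" by linarith
  then show ?thesis
  proof cases
    case 1
    then have "lex_gt_at e X P W p"
      using p q unfolding lex_gt_at_def by auto
    then show ?thesis ..
  next
    case 2
    then have "lex_gt_at e X P W q"
      using p q unfolding lex_gt_at_def by auto
    then show ?thesis ..
  qed
qed

lemma finite_ex_lex_maximal:
  assumes "finite F" "F \<noteq> {}" "inj_on e X"
  shows "\<exists>C\<in>F. \<forall>W\<in>F. \<forall>x. \<not> lex_gt_at e X (g W) (g C) x"
  using assms(1,2)
proof (induction F rule: finite_ne_induct)
  case (singleton W)
  then show ?case by (simp add: lex_gt_at_irrefl)
next
  case (insert W F)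
  then obtain C where C: "C \<in> F" "\<forall>V\<in>F. \<forall>x. \<not> lex_gt_at e X (g V) (g C) x"
    by blast
  show ?case
  proof (cases "\<exists>y. lex_gt_at e X (g W) (g C) y")
    case True
    then obtain y where y: "lex_gt_at e X (g W) (g C) y" ..
    have "\<not> lex_gt_at e X (g V) (g W) x" if "V \<in> insert W F" for V x
    proof
      assume "lex_gt_at e X (g V) (g W) x"
      moreover from this have "V \<in> F"
        using that by (auto simp: lex_gt_at_irrefl)
      ultimately show False
        using C lex_gt_at_trans[OF \<open>inj_on e X\<close> _ y] by blast
    qed
    then show ?thesis by blast
  next
    case False
    then show ?thesis using C by blast
  qed
qed

lemma psubset_imp_lex_gt_at:
  fixes e :: "'a \<Rightarrow> nat"
  assumes "Q \<subset> P" "P \<subseteq> X"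
  shows "\<exists>x. lex_gt_at e X P Q x"
proof -
  obtain x0 where "x0 \<in> P - Q" using assms(1) by blast
  then obtain x where x: "x \<in> P - Q" and least: "\<And>y. y \<in> P - Q \<Longrightarrow> e x \<le> e y"
    using ex_has_least_nat[of "\<lambda>x. x \<in> P - Q" x0 e] by blast
  have "y \<in> Q" if "y \<in> P" "e y < e x" for y
    using least[of y] that by force
  then have "lex_gt_at e X P Q x"
    unfolding lex_gt_at_def using x assms by auto
  then show ?thesis ..
qed

lemma lex_gt_at_cong:
  assumes "\<And>z. z \<in> X \<Longrightarrow> e z \<le> e x \<Longrightarrow> (z \<in> P \<longleftrightarrow> z \<in> P') \<and> (z \<in> Q \<longleftrightarrow> z \<in> Q')"
  shows "lex_gt_at e X P Q x = lex_gt_at e X P' Q' x"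
  unfolding lex_gt_at_def using assms by (auto simp: less_imp_le)

definition range_if :: "bool \<Rightarrow> ('a \<times> 'a) set \<Rightarrow> 'a set \<Rightarrow> 'a set" where
  "range_if b R S = (if b then range_plus R S else S)"

definition cf_maximal :: "bool \<Rightarrow> 'a set \<Rightarrow> ('a \<times> 'a) set \<Rightarrow> 'a set \<Rightarrow> bool" where
  "cf_maximal b A R S \<longleftrightarrow> conflict_free A R S \<and>
     \<not> (\<exists>T. conflict_free A R T \<and> range_if b R S \<subset> range_if b R T)"

definition scc_local :: "bool \<Rightarrow> 'a set \<Rightarrow> ('a \<times> 'a) set \<Rightarrow> 'a set \<Rightarrow> 'a set \<Rightarrow> bool" where
  "scc_local b A R S X \<longleftrightarrow>
     (let Y = X - D_set R S X in cf_maximal b (A \<inter> Y) (R \<inter> (Y \<times> Y)) (S \<inter> X))"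

definition scc_sem :: "bool \<Rightarrow> 'a set \<Rightarrow> ('a \<times> 'a) set \<Rightarrow> 'a set \<Rightarrow> bool" where
  "scc_sem b A R S \<longleftrightarrow> conflict_free A R S \<and> (\<forall>X\<in>SCCs A R. scc_local b A R S X)"

lemma cf15_eq_scc_sem: "cf15 = scc_sem False"
  by (simp add: fun_eq_iff cf15_def scc_sem_def scc_local_def cf_maximal_def naive_def range_if_def)

lemma stg15_eq_scc_sem: "stg15 = scc_sem True"
  by (simp add: fun_eq_iff stg15_def scc_sem_def scc_local_def cf_maximal_def stage_def range_if_def)

definition scc_of :: "'a set \<Rightarrow> ('a \<times> 'a) set \<Rightarrow> 'a \<Rightarrow> 'a set" where
  "scc_of A R a = {b\<in>A. (a, b) \<in> R\<^sup>* \<and> (b, a) \<in> R\<^sup>*}"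

lemma SCCs_eq_image_scc_of: "SCCs A R = scc_of A R ` A"
  unfolding SCCs_def scc_of_def by auto

lemma SCCs_eq_scc_of: "X \<in> SCCs A R \<Longrightarrow> x \<in> X \<Longrightarrow> X = scc_of A R x"
  unfolding SCCs_eq_image_scc_of scc_of_def by (auto intro: rtrancl_trans)

lemma SCCs_subset: "X \<in> SCCs A R \<Longrightarrow> X \<subseteq> A"
  unfolding SCCs_def by auto

lemma SCCs_rtrancl:
  assumes "X \<in> SCCs A R" "x \<in> X" "y \<in> X"
  shows "(x, y) \<in> R\<^sup>*"
proof -
  have "y \<in> scc_of A R x" using SCCs_eq_scc_of[OF assms(1,2)] assms(3) by simp
  then show ?thesis unfolding scc_of_def by simp
qed

lemma SCCs_disjoint:
  assumes "X \<in> SCCs A R" "X' \<in> SCCs A R" "x \<in> X" "x \<in> X'"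
  shows "X = X'"
  using SCCs_eq_scc_of[OF assms(1,3)] SCCs_eq_scc_of[OF assms(2,4)] by simp

lemma finite_SCCs_ex_sink:
  assumes "finite \<Phi>" "\<Phi> \<noteq> {}" "\<Phi> \<subseteq> SCCs A R"
  shows "\<exists>X\<in>\<Phi>. \<forall>X'\<in>\<Phi>. \<forall>x\<in>X. \<forall>x'\<in>X'. (x, x') \<in> R \<longrightarrow> X' = X"
proof -
  \<comment> \<open>an SCC with \<open>\<subseteq>\<close>-minimal set of descendants is a sink\<close>
  obtain M where "M \<in> (\<lambda>X. R\<^sup>* `` X) ` \<Phi>" and M: "\<forall>B\<in>(\<lambda>X. R\<^sup>* `` X) ` \<Phi>. B \<subseteq> M \<longrightarrow> M = B"
    using finite_has_minimal[of "(\<lambda>X. R\<^sup>* `` X) ` \<Phi>"] assms(1,2) by blast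
  then obtain X where X: "X \<in> \<Phi>" "M = R\<^sup>* `` X" by blast
  have min: "R\<^sup>* `` X = R\<^sup>* `` X'" if "X' \<in> \<Phi>" "R\<^sup>* `` X' \<subseteq> R\<^sup>* `` X" for X'
    using M that X(2) by blast
  have "X' = X" if X': "X' \<in> \<Phi>" and "x \<in> X" "x' \<in> X'" "(x, x') \<in> R" for X' x x'
  proof -
    have SCC: "X \<in> SCCs A R" "X' \<in> SCCs A R"
      using X(1) X' assms(3) by blast+
    have "R\<^sup>* `` X' \<subseteq> R\<^sup>* `` X"
    proof
      fix y assume "y \<in> R\<^sup>* `` X'"
      then obtain x0 where "x0 \<in> X'" "(x0, y) \<in> R\<^sup>*" by blast
      then have "(x, y) \<in> R\<^sup>*"
        using SCCs_rtrancl[OF SCC(2) \<open>x' \<in> X'\<close>] \<open>(x, x') \<in> R\<close> by (meson converse_rtrancl_into_rtrancl rtrancl_trans)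
      then show "y \<in> R\<^sup>* `` X" using \<open>x \<in> X\<close> by blast
    qed
    then have "x \<in> R\<^sup>* `` X'"
      using min[OF X'] \<open>x \<in> X\<close> by blast
    then obtain x0 where "x0 \<in> X'" "(x0, x) \<in> R\<^sup>*" by blast
    then have "(x', x) \<in> R\<^sup>*"
      using SCCs_rtrancl[OF SCC(2) \<open>x' \<in> X'\<close>] rtrancl_trans by metis
    moreover have "x' \<in> A"
      using SCCs_subset[OF SCC(2)] \<open>x' \<in> X'\<close> by blast
    ultimately have "x' \<in> scc_of A R x"
      unfolding scc_of_def using \<open>(x, x') \<in> R\<close> by simp
    then show "X' = X"
      using SCCs_eq_scc_of[OF SCC(1) \<open>x \<in> X\<close>] SCCs_disjoint[OF SCC(2,1) \<open>x' \<in> X'\<close>] by simp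
  qed
  then show ?thesis using X(1) by blast
qed

locale attack_closed =
  fixes R :: "('a \<times> 'a) set" and U :: "'a set"
  assumes attack_closed: "\<And>a b. (a, b) \<in> R \<Longrightarrow> b \<in> U \<Longrightarrow> a \<in> U"
begin

lemma rtrancl_restrict:
  assumes "(a, b) \<in> R\<^sup>*" "b \<in> U"
  shows "a \<in> U \<and> (a, b) \<in> (R \<inter> (U \<times> U))\<^sup>*"
  using assms
proof (induction rule: converse_rtrancl_induct)
  case (step a c)
  then have "c \<in> U" "(c, b) \<in> (R \<inter> (U \<times> U))\<^sup>*" by simp_all
  moreover have "a \<in> U" using attack_closed[OF \<open>(a, c) \<in> R\<close> \<open>c \<in> U\<close>] .
  ultimately show ?case
    using \<open>(a, c) \<in> R\<close> by (simp add: converse_rtrancl_into_rtrancl)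
qed simp

lemma scc_of_restrict:
  assumes "a \<in> U"
  shows "scc_of (A \<inter> U) (R \<inter> (U \<times> U)) a = scc_of A R a"
proof (intro set_eqI iffI)
  fix b assume "b \<in> scc_of (A \<inter> U) (R \<inter> (U \<times> U)) a"
  then have "b \<in> A" "(a, b) \<in> (R \<inter> (U \<times> U))\<^sup>*" "(b, a) \<in> (R \<inter> (U \<times> U))\<^sup>*"
    unfolding scc_of_def by simp_all
  moreover have "(R \<inter> (U \<times> U))\<^sup>* \<subseteq> R\<^sup>*" by (rule rtrancl_mono) blast
  ultimately show "b \<in> scc_of A R a"
    unfolding scc_of_def by (simp add: subset_iff)
next
  fix b assume b: "b \<in> scc_of A R a"
  then have "(b, a) \<in> R\<^sup>*" "(a, b) \<in> R\<^sup>*" "b \<in> A" unfolding scc_of_def by simp_all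
  then have "b \<in> U" "(b, a) \<in> (R \<inter> (U \<times> U))\<^sup>*"
    using rtrancl_restrict[OF _ \<open>a \<in> U\<close>] by simp_all
  moreover have "(a, b) \<in> (R \<inter> (U \<times> U))\<^sup>*"
    using rtrancl_restrict[OF \<open>(a, b) \<in> R\<^sup>*\<close> \<open>b \<in> U\<close>] by simp
  ultimately show "b \<in> scc_of (A \<inter> U) (R \<inter> (U \<times> U)) a"
    using \<open>b \<in> A\<close> unfolding scc_of_def by simp
qed

lemma SCCs_subset_or_disjoint:
  assumes "X \<in> SCCs A R"
  shows "X \<subseteq> U \<or> X \<inter> U = {}"
proof (rule disjCI)
  assume "X \<inter> U \<noteq> {}"
  then obtain y where "y \<in> X" "y \<in> U" by blast
  show "X \<subseteq> U"
  proof
    fix x assume "x \<in> X"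
    then have "(x, y) \<in> R\<^sup>*" by (rule SCCs_rtrancl[OF \<open>X \<in> SCCs A R\<close> _ \<open>y \<in> X\<close>])
    then show "x \<in> U" using rtrancl_restrict[OF _ \<open>y \<in> U\<close>] by simp
  qed
qed

lemma SCCs_restrict: "SCCs (A \<inter> U) (R \<inter> (U \<times> U)) = {X \<in> SCCs A R. X \<subseteq> U}"
proof -
  have sub: "scc_of A R a \<subseteq> U" if "a \<in> U" for a
  proof
    fix b assume "b \<in> scc_of A R a"
    then have "(b, a) \<in> R\<^sup>*" unfolding scc_of_def by simp
    then show "b \<in> U" using rtrancl_restrict[OF _ that] by simp
  qed
  have "SCCs (A \<inter> U) (R \<inter> (U \<times> U)) = scc_of A R ` (A \<inter> U)"
    unfolding SCCs_eq_image_scc_of using scc_of_restrict by simp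
  also have "\<dots> = {X \<in> scc_of A R ` A. X \<subseteq> U}"
  proof (intro set_eqI iffI)
    fix X assume "X \<in> {X \<in> scc_of A R ` A. X \<subseteq> U}"
    then obtain a where "a \<in> A" "X = scc_of A R a" "X \<subseteq> U" by blast
    moreover from \<open>a \<in> A\<close> have "a \<in> scc_of A R a" unfolding scc_of_def by simp
    ultimately show "X \<in> scc_of A R ` (A \<inter> U)" by blast
  qed (use sub in blast)
  finally show ?thesis unfolding SCCs_eq_image_scc_of .
qed

lemma scc_local_restrict:
  assumes "X \<subseteq> U"
  shows "scc_local b (A \<inter> U) (R \<inter> (U \<times> U)) (S \<inter> U) X = scc_local b A R S X"
proof -
  have "D_set (R \<inter> (U \<times> U)) (S \<inter> U) X = D_set R S X"
    unfolding D_set_def using attack_closed \<open>X \<subseteq> U\<close> by blast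
  moreover have "A \<inter> U \<inter> Y = A \<inter> Y" "R \<inter> (U \<times> U) \<inter> (Y \<times> Y) = R \<inter> (Y \<times> Y)"
    if "Y \<subseteq> X" for Y
    using that \<open>X \<subseteq> U\<close> by auto
  moreover have "S \<inter> U \<inter> X = S \<inter> X"
    using \<open>X \<subseteq> U\<close> by auto
  ultimately show ?thesis
    unfolding scc_local_def Let_def by (simp add: Diff_subset)
qed

lemma scc_sem_restrict:
  assumes "scc_sem b A R S"
  shows "scc_sem b (A \<inter> U) (R \<inter> (U \<times> U)) (S \<inter> U)"
proof -
  have "conflict_free (A \<inter> U) (R \<inter> (U \<times> U)) (S \<inter> U)"
    using assms unfolding scc_sem_def conflict_free_def by auto
  moreover have "scc_local b (A \<inter> U) (R \<inter> (U \<times> U)) (S \<inter> U) X"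
    if "X \<in> SCCs (A \<inter> U) (R \<inter> (U \<times> U))" for X
  proof -
    have "X \<in> SCCs A R" "X \<subseteq> U"
      using that SCCs_restrict by auto
    then show ?thesis
      using assms scc_local_restrict[OF \<open>X \<subseteq> U\<close>]
      unfolding scc_sem_def by simp
  qed
  ultimately show ?thesis unfolding scc_sem_def by simp
qed

end

locale finitary_attack_closed = attack_closed R U
  for R :: "('a \<times> 'a) set" and U :: "'a set" +
  fixes A :: "'a set"
  assumes R_subset: "R \<subseteq> A \<times> A"
    and finitary: "finitary A R"
begin

definition attackers :: "'a \<Rightarrow> 'a set" where
  "attackers z = {a. (a, z) \<in> R}"

lemma finite_attackers: "finite (attackers z)"
proof (cases "z \<in> A")
  case True
  then show ?thesis using finitary unfolding finitary_def attackers_def by blast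
next
  case False
  then have "attackers z = {}" using R_subset unfolding attackers_def by blast
  then show ?thesis by simp
qed

lemma countable_SCC:
  assumes "X \<in> SCCs A R"
  shows "countable X"
proof -
  obtain a where X: "X = scc_of A R a"
    using assms unfolding SCCs_eq_image_scc_of by blast
  have "finite {b. (b, a) \<in> R ^^ n}" for n
  proof (induction n)
    case (Suc n)
    have "{b. (b, a) \<in> R ^^ Suc n} \<subseteq> (\<Union>c\<in>{c. (c, a) \<in> R ^^ n}. attackers c)"
    proof
      fix b assume "b \<in> {b. (b, a) \<in> R ^^ Suc n}"
      then have "(b, a) \<in> R ^^ Suc n" by simp
      then obtain c where "(b, c) \<in> R" "(c, a) \<in> R ^^ n"
        using relpow_Suc_D2 by metis
      then show "b \<in> (\<Union>c\<in>{c. (c, a) \<in> R ^^ n}. attackers c)"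
        unfolding attackers_def by blast
    qed
    then show ?case
      using finite_UN_I[OF Suc.IH finite_attackers] by (rule finite_subset)
  qed simp
  moreover have "X \<subseteq> (\<Union>n. {b. (b, a) \<in> R ^^ n})"
    unfolding X scc_of_def by (auto simp: rtrancl_power)
  ultimately show ?thesis
    by (meson countable_UN countable_finite countable_subset UNIV_I countableI_type)
qed

definition undefeated :: "'a set \<Rightarrow> 'a set \<Rightarrow> 'a set" where
  "undefeated S X = X - D_set R S X"

definition local_range :: "bool \<Rightarrow> 'a set \<Rightarrow> 'a set \<Rightarrow> 'a set \<Rightarrow> 'a set" where
  "local_range b S X W = range_if b (R \<inter> (undefeated S X \<times> undefeated S X)) W"

text \<open>Each instance of \<open>lex_optimal\<close> depends on finitely many arguments only, yet all
  instances together force \<open>\<subseteq>\<close>-maximality; this is what makes compactness applicable.\<close>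

definition lex_optimal :: "bool \<Rightarrow> 'a set \<Rightarrow> 'a set \<Rightarrow> 'a set \<Rightarrow> 'a \<Rightarrow> bool" where
  "lex_optimal b S X T x \<longleftrightarrow>
     \<not> lex_gt_at (to_nat_on X) X (local_range b S X (T \<inter> undefeated S X)) (local_range b S X (S \<inter> X)) x"

lemma mem_undefeated: "z \<in> undefeated S X \<longleftrightarrow> z \<in> X \<and> (\<forall>a\<in>attackers z. a \<in> S \<longrightarrow> a \<in> X)"
  unfolding undefeated_def D_set_def attackers_def by blast

lemma mem_local_range:
  "z \<in> local_range b S X W \<longleftrightarrow>
     z \<in> W \<or> (b \<and> z \<in> undefeated S X \<and> (\<exists>y\<in>attackers z. y \<in> W \<and> y \<in> undefeated S X))"
  unfolding local_range_def range_if_def range_plus_def attackers_def by auto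

lemma undefeated_subset: "undefeated S X \<subseteq> X"
  unfolding undefeated_def by blast

lemma local_range_subset: "W \<subseteq> undefeated S X \<Longrightarrow> local_range b S X W \<subseteq> undefeated S X"
  using mem_local_range by blast

lemma local_range_cong: "undefeated S X = undefeated S' X \<Longrightarrow> local_range b S X = local_range b S' X"
  unfolding local_range_def by simp

definition neighbourhood :: "'a \<Rightarrow> 'a set" where
  "neighbourhood z = insert z (attackers z \<union> \<Union>(attackers ` attackers z))"

lemma mem_local_range_cong:
  assumes "S \<inter> neighbourhood z = S' \<inter> neighbourhood z"
  shows "z \<in> local_range b S X (T \<inter> undefeated S X) \<longleftrightarrow> z \<in> local_range b S' X (T \<inter> undefeated S' X)"
    and "z \<in> local_range b S X (S \<inter> X) \<longleftrightarrow> z \<in> local_range b S' X (S' \<inter> X)"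
proof -
  have "z \<in> S \<longleftrightarrow> z \<in> S'" and attackers: "\<And>a. a \<in> attackers z \<Longrightarrow> a \<in> S \<longleftrightarrow> a \<in> S'"
    using assms unfolding neighbourhood_def by blast+
  moreover have "z \<in> undefeated S X \<longleftrightarrow> z \<in> undefeated S' X"
    unfolding mem_undefeated using attackers by blast
  moreover have "y \<in> undefeated S X \<longleftrightarrow> y \<in> undefeated S' X" if "y \<in> attackers z" for y
  proof -
    have "a \<in> S \<longleftrightarrow> a \<in> S'" if "a \<in> attackers y" for a
      using assms that \<open>y \<in> attackers z\<close> unfolding neighbourhood_def by blast
    then show ?thesis unfolding mem_undefeated by blast
  qed
  ultimately show "z \<in> local_range b S X (T \<inter> undefeated S X) \<longleftrightarrow> z \<in> local_range b S' X (T \<inter> undefeated S' X)"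
    and "z \<in> local_range b S X (S \<inter> X) \<longleftrightarrow> z \<in> local_range b S' X (S' \<inter> X)"
    unfolding mem_local_range by auto
qed

lemma lex_optimal_finite_support:
  assumes "X \<in> SCCs A R"
  shows "\<exists>V. finite V \<and> (\<forall>S S'. S \<inter> V = S' \<inter> V \<longrightarrow> lex_optimal b S X T x = lex_optimal b S' X T x)"
proof (intro exI conjI allI impI)
  let ?Z = "{z \<in> X. to_nat_on X z \<le> to_nat_on X x}"
  have "?Z = to_nat_on X -` {..to_nat_on X x} \<inter> X" by auto
  then have "finite ?Z"
    using finite_vimage_IntI[OF _ inj_on_to_nat_on[OF countable_SCC[OF assms]]] by simp
  then show "finite (\<Union>(neighbourhood ` ?Z))"
    unfolding neighbourhood_def using finite_attackers by auto
  fix S S' assume "S \<inter> \<Union>(neighbourhood ` ?Z) = S' \<inter> \<Union>(neighbourhood ` ?Z)"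
  then have local: "S \<inter> neighbourhood z = S' \<inter> neighbourhood z" if "z \<in> ?Z" for z
    using that by blast
  show "lex_optimal b S X T x = lex_optimal b S' X T x"
    unfolding lex_optimal_def
    by (intro arg_cong[where f = Not] lex_gt_at_cong) (simp add: mem_local_range_cong[OF local])
qed

lemma lex_optimal_cong:
  "S \<inter> X = S' \<inter> X \<Longrightarrow> undefeated S X = undefeated S' X \<Longrightarrow> lex_optimal b S X T x = lex_optimal b S' X T x"
  unfolding lex_optimal_def using local_range_cong by metis

lemma lex_optimal_union_unaffected:
  assumes "C \<inter> X = {}" and "\<And>c x'. c \<in> C \<Longrightarrow> x' \<in> X \<Longrightarrow> (c, x') \<notin> R"
  shows "lex_optimal b (S \<union> C) X T x = lex_optimal b S X T x"
proof (rule lex_optimal_cong)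
  show "(S \<union> C) \<inter> X = S \<inter> X"
    using assms(1) by blast
  show "undefeated (S \<union> C) X = undefeated S X"
    using assms(2) unfolding undefeated_def D_set_def by blast
qed

lemma conflict_free_union_sink:
  assumes "X \<inter> U = {}"
    and sink: "\<And>X' x x'. X' \<in> \<Phi> \<Longrightarrow> x \<in> X \<Longrightarrow> x' \<in> X' \<Longrightarrow> (x, x') \<notin> R"
    and S: "conflict_free A R S" "S \<subseteq> U \<union> \<Union>\<Phi>" "S \<inter> X = {}"
    and C: "conflict_free A R C" "C \<subseteq> undefeated S X"
  shows "conflict_free A R (S \<union> C)"
  unfolding conflict_free_def
proof (intro conjI notI)
  show "S \<union> C \<subseteq> A"
    using S(1) C(1) unfolding conflict_free_def by blast
next
  have "C \<subseteq> X" using C(2) undefeated_subset by blast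
  assume "\<exists>a\<in>S \<union> C. \<exists>c\<in>S \<union> C. (a, c) \<in> R"
  then obtain a c where ac: "a \<in> S \<union> C" "c \<in> S \<union> C" "(a, c) \<in> R" by blast
  consider "a \<in> S" "c \<in> S" | "a \<in> C" "c \<in> C" | "a \<in> S" "c \<in> C" | "a \<in> C" "c \<in> S"
    using ac(1,2) by blast
  then show False
  proof cases
    case 1
    then show False using S(1) ac(3) unfolding conflict_free_def by blast
  next
    case 2
    then show False using C(1) ac(3) unfolding conflict_free_def by blast
  next
    case 3
    then have "c \<notin> undefeated S X"
      using ac(3) S(3) \<open>C \<subseteq> X\<close> unfolding undefeated_def D_set_def by blast
    then show False using 3 C(2) by blast
  next
    case 4
    then have "a \<notin> U" using \<open>C \<subseteq> X\<close> \<open>X \<inter> U = {}\<close> by blast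
    then have "c \<notin> U" using attack_closed ac(3) by blast
    then obtain X' where "X' \<in> \<Phi>" "c \<in> X'" using 4 S(2) by blast
    then show False using sink 4 \<open>C \<subseteq> X\<close> ac(3) by blast
  qed
qed

lemma lex_optimal_add_sink:
  assumes X: "X \<in> SCCs A R" "X \<inter> U = {}"
    and \<Phi>: "\<Phi> \<subseteq> SCCs A R" "X \<notin> \<Phi>"
    and sink: "\<And>X' x x'. X' \<in> \<Phi> \<Longrightarrow> x \<in> X \<Longrightarrow> x' \<in> X' \<Longrightarrow> (x, x') \<notin> R"
    and S: "conflict_free A R S" "S \<subseteq> U \<union> \<Union>\<Phi>"
    and \<T>: "finite \<T>" "\<And>T. T \<in> \<T> \<Longrightarrow> conflict_free A R T"
  obtains C where "C \<subseteq> X" "conflict_free A R (S \<union> C)"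
    "\<And>T x. T \<in> \<T> \<Longrightarrow> lex_optimal b (S \<union> C) X T x"
    "\<And>X' T x. X' \<in> \<Phi> \<Longrightarrow> lex_optimal b (S \<union> C) X' T x = lex_optimal b S X' T x"
proof -
  have disjoint: "X \<inter> X' = {}" if "X' \<in> \<Phi>" for X'
  proof (rule ccontr)
    assume "X \<inter> X' \<noteq> {}"
    then obtain x where "x \<in> X" "x \<in> X'" by blast
    then have "X = X'" using SCCs_disjoint[OF X(1)] \<Phi>(1) that by blast
    then show False using \<Phi>(2) that by simp
  qed
  then have "S \<inter> X = {}"
    using S(2) X(2) by blast
  define Y where "Y = undefeated S X"
  define \<C> where "\<C> = insert {} ((\<lambda>T. T \<inter> Y) ` \<T>)"
  have "finite \<C>" "\<C> \<noteq> {}"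
    unfolding \<C>_def using \<T>(1) by simp_all
  obtain C where "C \<in> \<C>"
    and C_max: "\<forall>W\<in>\<C>. \<forall>x. \<not> lex_gt_at (to_nat_on X) X (local_range b S X W) (local_range b S X C) x"
    using finite_ex_lex_maximal[OF \<open>finite \<C>\<close> \<open>\<C> \<noteq> {}\<close> inj_on_to_nat_on[OF countable_SCC[OF X(1)]],
        of "local_range b S X"]
    by blast
  have "C \<subseteq> Y \<and> conflict_free A R C"
  proof (cases "C = {}")
    case False
    then obtain T where "T \<in> \<T>" "C = T \<inter> Y" using \<open>C \<in> \<C>\<close> unfolding \<C>_def by blast
    then show ?thesis using \<T>(2) unfolding conflict_free_def by blast
  qed (simp add: conflict_free_def)
  then have "C \<subseteq> Y" "conflict_free A R C" by simp_all
  then have "C \<subseteq> X"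
    using undefeated_subset unfolding Y_def by blast
  have "undefeated (S \<union> C) X = Y"
  proof -
    have "(S \<union> C) - X = S - X" using \<open>C \<subseteq> X\<close> by blast
    then show ?thesis unfolding Y_def undefeated_def D_set_def by simp
  qed
  moreover have "(S \<union> C) \<inter> X = C"
    using \<open>S \<inter> X = {}\<close> \<open>C \<subseteq> X\<close> by blast
  ultimately have "lex_optimal b (S \<union> C) X T x" if "T \<in> \<T>" for T x
    using that C_max local_range_cong[of "S \<union> C" X S]
    unfolding lex_optimal_def Y_def \<C>_def by simp
  moreover have "lex_optimal b (S \<union> C) X' T x = lex_optimal b S X' T x" if "X' \<in> \<Phi>" for X' T x
  proof (rule lex_optimal_union_unaffected)
    show "C \<inter> X' = {}" using disjoint[OF that] \<open>C \<subseteq> X\<close> by blast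
    show "(c, x') \<notin> R" if "c \<in> C" "x' \<in> X'" for c x'
      using sink[OF \<open>X' \<in> \<Phi>\<close>] \<open>C \<subseteq> X\<close> that by blast
  qed
  moreover have "conflict_free A R (S \<union> C)"
  proof (rule conflict_free_union_sink[OF X(2) _ S \<open>S \<inter> X = {}\<close> \<open>conflict_free A R C\<close>])
    show "C \<subseteq> undefeated S X" using \<open>C \<subseteq> Y\<close> unfolding Y_def .
  qed (rule sink)
  ultimately show ?thesis using that \<open>C \<subseteq> X\<close> by blast
qed

lemma finite_lex_optimal_extension:
  assumes S': "conflict_free A R S'" "S' \<subseteq> U"
    and \<T>: "finite \<T>" "\<And>T. T \<in> \<T> \<Longrightarrow> conflict_free A R T"
    and \<Phi>: "finite \<Phi>" "\<Phi> \<subseteq> {X \<in> SCCs A R. X \<inter> U = {}}"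
  shows "\<exists>S. conflict_free A R S \<and> S \<inter> U = S' \<and> S \<subseteq> U \<union> \<Union>\<Phi> \<and>
    (\<forall>X\<in>\<Phi>. \<forall>T\<in>\<T>. \<forall>x. lex_optimal b S X T x)"
  using \<Phi>
proof (induction \<Phi> rule: finite_remove_induct)
  case empty
  show ?case using S' by (intro exI[of _ S']) auto
next
  case (remove \<Phi>)
  from remove.prems have "\<Phi> \<subseteq> SCCs A R" by blast
  then obtain X where "X \<in> \<Phi>" and sink: "\<forall>X'\<in>\<Phi>. \<forall>x\<in>X. \<forall>x'\<in>X'. (x, x') \<in> R \<longrightarrow> X' = X"
    using finite_SCCs_ex_sink[OF remove.hyps(1,2)] by blast
  then have X: "X \<in> SCCs A R" "X \<inter> U = {}"
    using remove.prems by blast+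
  obtain S where S: "conflict_free A R S" "S \<inter> U = S'" "S \<subseteq> U \<union> \<Union>(\<Phi> - {X})"
    and opt: "\<forall>X'\<in>\<Phi> - {X}. \<forall>T\<in>\<T>. \<forall>x. lex_optimal b S X' T x"
    using remove.IH[OF \<open>X \<in> \<Phi>\<close>] remove.prems by blast
  have "\<Phi> - {X} \<subseteq> SCCs A R" "X \<notin> \<Phi> - {X}"
    using \<open>\<Phi> \<subseteq> SCCs A R\<close> by blast+
  moreover have "(x, x') \<notin> R" if "X' \<in> \<Phi> - {X}" "x \<in> X" "x' \<in> X'" for X' x x'
    using sink that by blast
  ultimately obtain C where "C \<subseteq> X" "conflict_free A R (S \<union> C)"
    and opt_X: "\<And>T x. T \<in> \<T> \<Longrightarrow> lex_optimal b (S \<union> C) X T x"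
    and opt_other: "\<And>X' T x. X' \<in> \<Phi> - {X} \<Longrightarrow> lex_optimal b (S \<union> C) X' T x = lex_optimal b S X' T x"
    using lex_optimal_add_sink[OF X _ _ _ S(1,3) \<T>] by metis
  have "(S \<union> C) \<inter> U = S'"
    using S(2) \<open>C \<subseteq> X\<close> X(2) by blast
  moreover have "S \<union> C \<subseteq> U \<union> \<Union>\<Phi>"
    using S(3) \<open>C \<subseteq> X\<close> \<open>X \<in> \<Phi>\<close> by blast
  moreover have "\<forall>X'\<in>\<Phi>. \<forall>T\<in>\<T>. \<forall>x. lex_optimal b (S \<union> C) X' T x"
    using opt opt_X opt_other by blast
  ultimately show ?case
    using \<open>conflict_free A R (S \<union> C)\<close> by blast
qed

lemma lex_optimal_imp_scc_local:
  assumes "conflict_free A R S" and opt: "\<And>T x. conflict_free A R T \<Longrightarrow> lex_optimal b S X T x"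
  shows "scc_local b A R S X"
proof -
  define Y where "Y = undefeated S X"
  have "S \<inter> X \<subseteq> Y"
    using assms(1) unfolding Y_def undefeated_def D_set_def conflict_free_def by blast
  then have cf: "conflict_free (A \<inter> Y) (R \<inter> (Y \<times> Y)) (S \<inter> X)"
    using assms(1) unfolding conflict_free_def by blast
  have "\<not> range_if b (R \<inter> (Y \<times> Y)) (S \<inter> X) \<subset> range_if b (R \<inter> (Y \<times> Y)) T"
    if T: "conflict_free (A \<inter> Y) (R \<inter> (Y \<times> Y)) T" for T
  proof
    assume psub: "range_if b (R \<inter> (Y \<times> Y)) (S \<inter> X) \<subset> range_if b (R \<inter> (Y \<times> Y)) T"
    have "T \<subseteq> Y" using T unfolding conflict_free_def by blast
    then have "conflict_free A R T"
      using T unfolding conflict_free_def by blast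
    have "local_range b S X (T \<inter> Y) \<subseteq> Y"
      unfolding Y_def by (rule local_range_subset) simp
    then have "local_range b S X (T \<inter> Y) \<subseteq> X"
      using undefeated_subset unfolding Y_def by (rule subset_trans)
    moreover have "local_range b S X (S \<inter> X) \<subset> local_range b S X (T \<inter> Y)"
      using psub \<open>T \<subseteq> Y\<close> unfolding local_range_def Y_def by (simp add: Int_absorb2)
    ultimately obtain x where "lex_gt_at (to_nat_on X) X (local_range b S X (T \<inter> Y)) (local_range b S X (S \<inter> X)) x"
      using psubset_imp_lex_gt_at[where e = "to_nat_on X"] by blast
    then show False
      using opt[OF \<open>conflict_free A R T\<close>, of x] unfolding lex_optimal_def Y_def by simp
  qed
  then show ?thesis
    using cf unfolding scc_local_def cf_maximal_def Let_def Y_def undefeated_def by blast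
qed

corollary finite_lex_optimal_extension_triples:
  assumes S': "conflict_free A R S'" "S' \<subseteq> U"
    and L: "finite L" "L \<subseteq> {X \<in> SCCs A R. X \<inter> U = {}} \<times> Collect (conflict_free A R) \<times> UNIV"
  shows "\<exists>S. conflict_free A R S \<and> S \<inter> U = S' \<and> (\<forall>(X, T, x)\<in>L. lex_optimal b S X T x)"
proof -
  have L_mem: "X \<in> SCCs A R \<and> X \<inter> U = {} \<and> conflict_free A R T" if "(X, T, x) \<in> L" for X T x
    using subsetD[OF L(2) that] by simp
  have fin: "finite (fst ` snd ` L)" "finite (fst ` L)"
    using L(1) by simp_all
  have \<Phi>: "fst ` L \<subseteq> {X \<in> SCCs A R. X \<inter> U = {}}"
    using L_mem by force
  have \<T>: "conflict_free A R T" if "T \<in> fst ` snd ` L" for T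
    using that L_mem by force
  obtain S where S: "conflict_free A R S" "S \<inter> U = S'"
    and opt: "\<forall>X\<in>fst ` L. \<forall>T\<in>fst ` snd ` L. \<forall>x. lex_optimal b S X T x"
    using finite_lex_optimal_extension[OF S' fin(1) \<T> fin(2) \<Phi>, of b] by blast
  have "lex_optimal b S X T x" if "(X, T, x) \<in> L" for X T x
  proof -
    from that have "X \<in> fst ` L" "T \<in> fst ` snd ` L" by force+
    then show ?thesis using opt by blast
  qed
  then show ?thesis using S by blast
qed

definition extension_constraints :: "'a set \<Rightarrow> ('a set \<Rightarrow> bool) set" where
  "extension_constraints S' =
     (\<lambda>(x, y) S. \<not> (x \<in> S \<and> y \<in> S)) ` R \<union> (\<lambda>x S. x \<notin> S) ` (- A) \<union> (\<lambda>u S. u \<in> S \<longleftrightarrow> u \<in> S') ` U"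

lemma extension_constraints_iff:
  assumes "S' \<subseteq> U"
  shows "(\<forall>P\<in>extension_constraints S'. P S) \<longleftrightarrow> conflict_free A R S \<and> S \<inter> U = S'"
proof -
  have "(\<forall>P\<in>extension_constraints S'. P S) \<longleftrightarrow>
      (\<forall>(x, y)\<in>R. \<not> (x \<in> S \<and> y \<in> S)) \<and> (\<forall>x\<in>- A. x \<notin> S) \<and> (\<forall>u\<in>U. u \<in> S \<longleftrightarrow> u \<in> S')"
    unfolding extension_constraints_def by (simp add: ball_Un case_prod_beta)
  also have "\<dots> \<longleftrightarrow> conflict_free A R S \<and> S \<inter> U = S'"
    using assms unfolding conflict_free_def by blast
  finally show ?thesis .
qed

lemma extension_constraints_finite_support:
  assumes "P \<in> extension_constraints S'"
  shows "\<exists>V. finite V \<and> (\<forall>S S2. S \<inter> V = S2 \<inter> V \<longrightarrow> P S = P S2)"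
proof -
  consider (conflict) x y where "P = (\<lambda>S. \<not> (x \<in> S \<and> y \<in> S))"
    | (outside) x where "P = (\<lambda>S. x \<notin> S)"
    | (agree) u where "P = (\<lambda>S. u \<in> S \<longleftrightarrow> u \<in> S')"
    using assms unfolding extension_constraints_def by auto
  then show ?thesis
  proof cases
    case conflict
    then show ?thesis by (intro exI[of _ "{x, y}"]) blast
  next
    case outside
    then show ?thesis by (intro exI[of _ "{x}"]) blast
  next
    case agree
    then show ?thesis by (intro exI[of _ "{u}"]) blast
  qed
qed

lemma ex_lex_optimal_solution:
  assumes S': "conflict_free A R S'" "S' \<subseteq> U"
  shows "\<exists>S. conflict_free A R S \<and> S \<inter> U = S' \<and>
    (\<forall>X\<in>SCCs A R. X \<inter> U = {} \<longrightarrow> (\<forall>T x. conflict_free A R T \<longrightarrow> lex_optimal b S X T x))"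
proof -
  define lex :: "'a set \<times> 'a set \<times> 'a \<Rightarrow> 'a set \<Rightarrow> bool" where
    "lex = (\<lambda>(X, T, x) S. lex_optimal b S X T x)"
  define L :: "('a set \<times> 'a set \<times> 'a) set"
    where "L = {X \<in> SCCs A R. X \<inter> U = {}} \<times> Collect (conflict_free A R) \<times> UNIV"
  have "\<exists>S. \<forall>P\<in>extension_constraints S' \<union> lex ` L. P S"
  proof (rule finite_support_compactness)
    fix P assume "P \<in> extension_constraints S' \<union> lex ` L"
    then show "\<exists>V. finite V \<and> (\<forall>S S2. S \<inter> V = S2 \<inter> V \<longrightarrow> P S = P S2)"
      using extension_constraints_finite_support lex_optimal_finite_support
      unfolding lex_def L_def by auto
  next
    fix K assume "finite K" "K \<subseteq> extension_constraints S' \<union> lex ` L"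
    moreover obtain L0 where "L0 \<subseteq> L" "finite L0" "K \<inter> lex ` L = lex ` L0"
      using finite_subset_image[of "K \<inter> lex ` L" lex L] \<open>finite K\<close> by blast
    ultimately have K: "K \<subseteq> extension_constraints S' \<union> lex ` L0" by blast
    obtain S where "conflict_free A R S" "S \<inter> U = S'" and opt: "\<forall>(X, T, x)\<in>L0. lex (X, T, x) S"
      using finite_lex_optimal_extension_triples[OF S' \<open>finite L0\<close>, of b] \<open>L0 \<subseteq> L\<close>
      unfolding L_def lex_def by auto
    then have "\<forall>P\<in>extension_constraints S' \<union> lex ` L0. P S"
      using extension_constraints_iff[OF S'(2)] by auto
    then show "\<exists>S. \<forall>P\<in>K. P S"
      using K by blast
  qed
  then obtain S where S: "\<And>P. P \<in> extension_constraints S' \<union> lex ` L \<Longrightarrow> P S" by blast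
  have "lex_optimal b S X T x"
    if "X \<in> SCCs A R" "X \<inter> U = {}" "conflict_free A R T" for X T x
  proof -
    have "lex (X, T, x) \<in> extension_constraints S' \<union> lex ` L" unfolding L_def using that by blast
    then have "lex (X, T, x) S" by (rule S)
    then show ?thesis unfolding lex_def by simp
  qed
  moreover have "conflict_free A R S \<and> S \<inter> U = S'"
    using S extension_constraints_iff[OF S'(2)] by blast
  ultimately show ?thesis by blast
qed

lemma scc_sem_extend:
  assumes "scc_sem b (A \<inter> U) (R \<inter> (U \<times> U)) S'"
  shows "\<exists>S. scc_sem b A R S \<and> S \<inter> U = S'"
proof -
  have "conflict_free (A \<inter> U) (R \<inter> (U \<times> U)) S'"
    using assms unfolding scc_sem_def by (rule conjunct1)
  then have S': "conflict_free A R S'" "S' \<subseteq> U"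
    unfolding conflict_free_def by blast+
  then obtain S where S: "conflict_free A R S" "S \<inter> U = S'"
    and opt: "\<And>X T x. X \<in> SCCs A R \<Longrightarrow> X \<inter> U = {} \<Longrightarrow> conflict_free A R T \<Longrightarrow> lex_optimal b S X T x"
    using ex_lex_optimal_solution[OF S', of b] by blast
  have "scc_local b A R S X" if X: "X \<in> SCCs A R" for X
    using SCCs_subset_or_disjoint[OF X]
  proof
    assume "X \<subseteq> U"
    then have "X \<in> SCCs (A \<inter> U) (R \<inter> (U \<times> U))"
      using X SCCs_restrict by auto
    then have "scc_local b (A \<inter> U) (R \<inter> (U \<times> U)) (S \<inter> U) X"
      using assms S(2) unfolding scc_sem_def by simp
    then show ?thesis
      using scc_local_restrict[OF \<open>X \<subseteq> U\<close>] by simp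
  next
    assume "X \<inter> U = {}"
    then show ?thesis
      using lex_optimal_imp_scc_local[OF S(1)] opt[OF X] by blast
  qed
  then show ?thesis
    using S unfolding scc_sem_def by auto
qed

lemma scc_sem_directional:
  "{S. scc_sem b (A \<inter> U) (R \<inter> (U \<times> U)) S} = (\<lambda>S. S \<inter> U) ` {S. scc_sem b A R S}"
proof (intro set_eqI iffI)
  fix S' assume "S' \<in> {S. scc_sem b (A \<inter> U) (R \<inter> (U \<times> U)) S}"
  then obtain S where "scc_sem b A R S" "S \<inter> U = S'"
    using scc_sem_extend by blast
  then show "S' \<in> (\<lambda>S. S \<inter> U) ` {S. scc_sem b A R S}" by blast
next
  fix S' assume "S' \<in> (\<lambda>S. S \<inter> U) ` {S. scc_sem b A R S}"
  then obtain S where "scc_sem b A R S" "S' = S \<inter> U" by blast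
  then show "S' \<in> {S. scc_sem b (A \<inter> U) (R \<inter> (U \<times> U)) S}"
    using scc_sem_restrict by simp
qed

end

theorem theorem6:
  fixes A :: "'a set" and R :: "('a \<times> 'a) set" and U :: "'a set"
  assumes "R \<subseteq> A \<times> A"
    and "finitary A R"
    and "U \<subseteq> A"
    and "unattacked A R U"
  shows "{S. cf15 (A \<inter> U) (R \<inter> (U \<times> U)) S} = (\<lambda>S. S \<inter> U) ` {S. cf15 A R S} \<and>
         {S. stg15 (A \<inter> U) (R \<inter> (U \<times> U)) S} = (\<lambda>S. S \<inter> U) ` {S. stg15 A R S}"
proof -
  have "a \<in> U" if "(a, b) \<in> R" "b \<in> U" for a b
    using that assms(1,4) unfolding unattacked_def by blast
  then interpret finitary_attack_closed R U A
    using assms(1,2) by unfold_locales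
  show ?thesis
    unfolding cf15_eq_scc_sem stg15_eq_scc_sem using scc_sem_directional by blast
qed

end
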